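(* Let $\varrho$ be a normalized proximate order of order $\rho>0$ and let $f(x)=\sum_{\ell=0}^\infty x^\ell a_\ell\in A_\varrho$. Suppose $\sigma\ge0$ satisfies $$\frac{1}{\rho}\ln(\sigma)\ge\limsup_{\ell\to\infty}\Big(\frac1\ell\ln|a_\ell|+\ln(\varphi(\ell))\Big)-\frac1\rho-\frac{\ln(\rho)}{\rho},$$ where $\ln(0)=-\infty$. Then for every $\tau'>\sigma$ there exist positive constants $N$ and $C$ such that $$\sup_{\ell\ge N}\big(\ln|a_\ell|+\ell\ln(r)\big)\le\tau' r^{\varrho(r)}+C\qquad\text{for all }r>0.$$
   Context: $\mathbb{R}_n$ is the real Clifford algebra generated by $e_1,\dots,e_n$ with $e_ie_j=-e_je_i$ ($i\ne j$), $e_i^2=-1$, with Euclidean norm $|a|^2=\sum_Aa_A^2$. Paravectors $x=x_0+\sum x_\ell e_\ell$ are identified with $\mathbb{R}^{n+1}$; $\mathbb{S}=\{\sum x_\ell e_\ell:\sum x_\ell^2=1\}$. $\mathcal{SM}_L(\mathbb{R}^{n+1})$ is the set of entire left slice monogenic functions: $f(u+jv)=f_0(u,v)+jf_1(u,v)$ for all $u,v\in\mathbb{R}$, $j\in\mathbb{S}$, with $f_0,f_1$ continuously differentiable, $f_0$ even and $f_1$ odd in $v$, $\partial_uf_0=\partial_vf_1$, $\partial_vf_0=-\partial_uf_1$; each such $f$ equals its series $\sum x^\ell a_\ell$, $a_\ell\in\mathbb{R}_n$. A proximate order is a differentiable $\varrho:[0,\infty)\to[0,\infty)$ with $\lim_{r\to\infty}\varrho(r)=\rho>0$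 and $\lim_{r\to\infty}\varrho'(r)r\ln r=0$; normalized means $r\mapsto r^{\varrho(r)}$ is strictly increasing on $(0,\infty)$ and tends to $0$ as $r\to0^+$; $\varphi$ is the inverse of $r\mapsto r^{\varrho(r)}$. $A_\varrho=\bigcup_{\sigma>0}\{f\in\mathcal{SM}_L(\mathbb{R}^{n+1}):\sup_x|f(x)|e^{-\sigma|x|^{\varrho(|x|)}}<\infty\}$. Here $\ln|a_\ell|=-\infty$ if $a_\ell=0$. *)

theory Defs
  imports "HOL-Analysis.Analysis"
begin

text \<open>An element a of R_n is represented by its coefficient function
  A |-> a_A on finite subsets A of {1..n} (a = sum_A a_A e_A, with
  e_A = e_{i1}...e_{ik}, i1 < ... < ik).\<close>

type_synonym clif = "nat set \<Rightarrow> real"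

definition clif_space :: "nat \<Rightarrow> clif set" where
  "clif_space n = {a. \<forall>A. \<not> A \<subseteq> {1..n} \<longrightarrow> a A = 0}"

text \<open>Sign in e_A e_B = sgn(A,B) e_(A symmetric-difference B), using
  e_i e_j = - e_j e_i (i \<noteq> j) and e_i^2 = -1.\<close>
definition clif_sign :: "nat set \<Rightarrow> nat set \<Rightarrow> real" where
  "clif_sign A B = (-1) ^ (card {(a, b). a \<in> A \<and> b \<in> B \<and> b < a} + card (A \<inter> B))"

definition clif_mult :: "nat \<Rightarrow> clif \<Rightarrow> clif \<Rightarrow> clif" where
  "clif_mult n a b = (\<lambda>C. \<Sum>A\<in>Pow {1..n}.
      clif_sign A ((A - C) \<union> (C - A)) * a A * b ((A - C) \<union> (C - A)))"

definition clif_add :: "clif \<Rightarrow> clif \<Rightarrow> clif" where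
  "clif_add a b = (\<lambda>A. a A + b A)"

definition clif_one :: clif where
  "clif_one = (\<lambda>A. if A = {} then 1 else 0)"

primrec clif_pow :: "nat \<Rightarrow> clif \<Rightarrow> nat \<Rightarrow> clif" where
  "clif_pow n x 0 = clif_one"
| "clif_pow n x (Suc k) = clif_mult n (clif_pow n x k) x"

definition clif_norm :: "nat \<Rightarrow> clif \<Rightarrow> real" where
  "clif_norm n a = sqrt (\<Sum>A\<in>Pow {1..n}. (a A)\<^sup>2)"

definition paravector :: "nat \<Rightarrow> clif \<Rightarrow> bool" where
  "paravector n x \<longleftrightarrow> (\<forall>A. x A \<noteq> 0 \<longrightarrow> A = {} \<or> (\<exists>l\<in>{1..n}. A = {l}))"

definition imag_unit :: "nat \<Rightarrow> clif \<Rightarrow> bool" where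
  "imag_unit n j \<longleftrightarrow> paravector n j \<and> j {} = 0 \<and> (\<Sum>l=1..n. (j {l})\<^sup>2) = 1"

definition slice_pt :: "real \<Rightarrow> clif \<Rightarrow> real \<Rightarrow> clif" where
  "slice_pt u j v = (\<lambda>A. if A = {} then u else v * j A)"

text \<open>f_0, f_1 continuously differentiable on R^2: all (componentwise) partial
  derivatives exist everywhere and are continuous on R^2.\<close>
definition slice_monogenic :: "nat \<Rightarrow> (clif \<Rightarrow> clif) \<Rightarrow> bool" where
  "slice_monogenic n f \<longleftrightarrow>
     (\<forall>x. paravector n x \<longrightarrow> f x \<in> clif_space n) \<and>
     (\<exists>f0 f1 Du0 Dv0 Du1 Dv1 :: real \<Rightarrow> real \<Rightarrow> clif.
        (\<forall>u v. f0 u v \<in> clif_space n \<and> f1 u v \<in> clif_space n) \<and>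
        (\<forall>u v j. imag_unit n j \<longrightarrow>
            f (slice_pt u j v) = clif_add (f0 u v) (clif_mult n j (f1 u v))) \<and>
        (\<forall>u v A. f0 u (- v) A = f0 u v A \<and> f1 u (- v) A = - f1 u v A) \<and>
        (\<forall>u v A.
            ((\<lambda>t. f0 t v A) has_real_derivative Du0 u v A) (at u) \<and>
            ((\<lambda>t. f0 u t A) has_real_derivative Dv0 u v A) (at v) \<and>
            ((\<lambda>t. f1 t v A) has_real_derivative Du1 u v A) (at u) \<and>
            ((\<lambda>t. f1 u t A) has_real_derivative Dv1 u v A) (at v)) \<and>
        (\<forall>A. continuous_on UNIV (\<lambda>p::real\<times>real. Du0 (fst p) (snd p) A) \<and>
             continuous_on UNIV (\<lambda>p::real\<times>real. Dv0 (fst p) (snd p) A) \<and>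
             continuous_on UNIV (\<lambda>p::real\<times>real. Du1 (fst p) (snd p) A) \<and>
             continuous_on UNIV (\<lambda>p::real\<times>real. Dv1 (fst p) (snd p) A)) \<and>
        (\<forall>u v A. Du0 u v A = Dv1 u v A \<and> Dv0 u v A = - Du1 u v A))"

definition proximate_order :: "(real \<Rightarrow> real) \<Rightarrow> real \<Rightarrow> bool" where
  "proximate_order \<rho>\<^sub>p \<rho> \<longleftrightarrow>
     \<rho> > 0 \<and> (\<forall>r\<ge>0. \<rho>\<^sub>p r \<ge> 0) \<and> \<rho>\<^sub>p differentiable_on {0..} \<and>
     (\<rho>\<^sub>p \<longlongrightarrow> \<rho>) at_top \<and>
     ((\<lambda>r. deriv \<rho>\<^sub>p r * r * ln r) \<longlongrightarrow> 0) at_top"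

definition normalized_proximate_order :: "(real \<Rightarrow> real) \<Rightarrow> real \<Rightarrow> bool" where
  "normalized_proximate_order \<rho>\<^sub>p \<rho> \<longleftrightarrow>
     proximate_order \<rho>\<^sub>p \<rho> \<and>
     strict_mono_on {0<..} (\<lambda>r. r powr \<rho>\<^sub>p r) \<and>
     ((\<lambda>r. r powr \<rho>\<^sub>p r) \<longlongrightarrow> 0) (at_right 0)"

text \<open>phi: the inverse of r |-> r^(rho(r)) on (0,oo).\<close>
definition prox_inv :: "(real \<Rightarrow> real) \<Rightarrow> real \<Rightarrow> real" where
  "prox_inv \<rho>\<^sub>p = inv_into {0<..} (\<lambda>r. r powr \<rho>\<^sub>p r)"

definition A_class :: "nat \<Rightarrow> (real \<Rightarrow> real) \<Rightarrow> (clif \<Rightarrow> clif) set" where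
  "A_class n \<rho>\<^sub>p = {f. slice_monogenic n f \<and>
     (\<exists>\<sigma>>0. \<exists>M. \<forall>x. paravector n x \<longrightarrow>
        clif_norm n (f x) * exp (- \<sigma> * clif_norm n x powr \<rho>\<^sub>p (clif_norm n x)) \<le> M)}"

definition lnE :: "real \<Rightarrow> ereal" where
  "lnE t = (if t = 0 then -\<infinity> else ereal (ln t))"

end

theory Submission
  imports Defs
begin

(* Put V(r) = r powr rp r and L(x) = ln V(exp x) = rp(exp x) * x; the proximate-order conditions
   imply that L'(x) tends to rho.  The limsup hypothesis provides a K above the limsup with
   rho K - 1 - ln rho < ln tau', so ln|a_l| < l (K - ln s) for large l, where s = phi(l) and
   V(s) = l.  Hence ln|a_l| + l ln r < V(s) (K + y) with y = ln(r/s), and it remains to show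
   V(s) (K + y) <= tau' V(r) for large s.  By the mean value theorem
   L(ln s + y) - L(ln s) >= k y for a slope k close to rho (below rho if y >= 0, above it
   if y < 0), and the tangent inequality ln t <= k t - 1 - ln k turns this into
   V(s) (K + y) <= exp (k K - 1 - ln k) V(r), a factor below tau' once k is close to rho. *)

lemma DERIV_ge_imp_increment_ge:
  fixes f f' :: "real \<Rightarrow> real"
  assumes "a \<le> b" and "\<And>z. a \<le> z \<Longrightarrow> z \<le> b \<Longrightarrow> DERIV f z :> f' z \<and> k \<le> f' z"
  shows "k * (b - a) \<le> f b - f a"
proof -
  have "f a - k * a \<le> f b - k * b"
  proof (rule DERIV_nonneg_imp_nondecreasing[OF \<open>a \<le> b\<close>, where f = "\<lambda>z. f z - k * z"])
    fix z assume "a \<le> z" "z \<le> b"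
    with assms(2) show "\<exists>y. DERIV (\<lambda>z. f z - k * z) z :> y \<and> 0 \<le> y"
      by (intro exI[of _ "f' z - k"]) (auto intro!: derivative_eq_intros)
  qed
  then show ?thesis by (simp add: algebra_simps)
qed

lemma DERIV_le_imp_increment_le:
  fixes f f' :: "real \<Rightarrow> real"
  assumes "a \<le> b" and "\<And>z. a \<le> z \<Longrightarrow> z \<le> b \<Longrightarrow> DERIV f z :> f' z \<and> f' z \<le> k"
  shows "f b - f a \<le> k * (b - a)"
proof -
  have "- k * (b - a) \<le> - f b - - f a"
    using assms by (intro DERIV_ge_imp_increment_ge) (auto intro: DERIV_minus)
  then show ?thesis by simp
qed

lemma slopes_around_keep_bound:
  fixes \<rho> K c :: real
  assumes "0 < \<rho>" and "\<rho> * K - 1 - ln \<rho> < c"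
  obtains k\<^sub>1 k\<^sub>2 where "0 < k\<^sub>1" "k\<^sub>1 < \<rho>" "\<rho> < k\<^sub>2"
    "k\<^sub>1 * K - 1 - ln k\<^sub>1 < c" "k\<^sub>2 * K - 1 - ln k\<^sub>2 < c"
proof -
  let ?g = "\<lambda>k. k * K - 1 - ln k"
  have "isCont ?g \<rho>"
    using assms(1) by (intro continuous_intros) auto
  then have "\<forall>\<^sub>F k in at \<rho>. ?g k < c"
    using assms(2) by (auto simp: isCont_def intro: order_tendstoD)
  then obtain d where "0 < d" and d: "\<And>k. k \<noteq> \<rho> \<Longrightarrow> dist k \<rho> < d \<Longrightarrow> ?g k < c"
    by (auto simp: eventually_at)
  define \<epsilon> where "\<epsilon> = min (d / 2) (\<rho> / 2)"
  have "0 < \<epsilon>" "\<epsilon> < \<rho>" "\<epsilon> < d"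
    using \<open>0 < d\<close> assms(1) by (auto simp: \<epsilon>_def)
  then show ?thesis
    using that[of "\<rho> - \<epsilon>" "\<rho> + \<epsilon>"] d[of "\<rho> - \<epsilon>"] d[of "\<rho> + \<epsilon>"]
    by (simp add: dist_real_def)
qed

lemma slope_tendsto_imp_shift_bound:
  fixes L L' :: "real \<Rightarrow> real" and \<rho> K c :: real
  assumes L: "\<And>x. DERIV L x :> L' x" and L': "(L' \<longlongrightarrow> \<rho>) at_top"
    and "0 < \<rho>" and "\<rho> * K - 1 - ln \<rho> < c"
  shows "\<exists>X. \<forall>x\<ge>X. \<forall>y. 0 < K + y \<longrightarrow> L x + ln (K + y) < c + L (x + y)"
proof -
  obtain k\<^sub>1 k\<^sub>2 where k: "0 < k\<^sub>1" "k\<^sub>1 < \<rho>" "\<rho> < k\<^sub>2"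
    and c: "k\<^sub>1 * K - 1 - ln k\<^sub>1 < c" "k\<^sub>2 * K - 1 - ln k\<^sub>2 < c"
    using slopes_around_keep_bound[OF assms(3,4)] by blast
  have "\<forall>\<^sub>F x in at_top. k\<^sub>1 < L' x \<and> L' x < k\<^sub>2"
    using k L' by (auto intro: eventually_conj order_tendstoD)
  then obtain X where X: "\<And>x. X \<le> x \<Longrightarrow> k\<^sub>1 < L' x \<and> L' x < k\<^sub>2"
    by (auto simp: eventually_at_top_linorder)
  show ?thesis
  proof (intro exI[of _ "X + \<bar>K\<bar>"] allI impI)
    fix x y assume x: "X + \<bar>K\<bar> \<le> x" and Ky: "0 < K + y"
    obtain k where "0 < k" "k * K - 1 - ln k < c" and incr: "k * y \<le> L (x + y) - L x"
    proof (cases "0 \<le> y")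
      case True
      have "k\<^sub>1 * (x + y - x) \<le> L (x + y) - L x"
        using True x X L by (intro DERIV_ge_imp_increment_ge) (auto intro: less_imp_le)
      then show ?thesis using that k c by simp
    next
      case False
      have "L x - L (x + y) \<le> k\<^sub>2 * (x - (x + y))"
        using False x Ky X L by (intro DERIV_le_imp_increment_le) (auto intro: less_imp_le)
      then show ?thesis using that[of k\<^sub>2] k c by (simp add: algebra_simps)
    qed
    have "ln (k * (K + y)) \<le> k * (K + y) - 1"
      using \<open>0 < k\<close> Ky by (intro ln_le_minus_one) simp
    then have "ln (K + y) \<le> k * (K + y) - 1 - ln k"
      using \<open>0 < k\<close> Ky by (simp add: ln_mult)
    then show "L x + ln (K + y) < c + L (x + y)"
      using incr \<open>k * K - 1 - ln k < c\<close> by (simp add: algebra_simps)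
  qed
qed

lemma proximate_order_DERIV:
  assumes "proximate_order rp \<rho>" and "0 < u"
  shows "DERIV rp u :> deriv rp u"
proof -
  have "rp differentiable at u within {0..}"
    using assms by (auto simp: proximate_order_def differentiable_on_def)
  moreover have "at u within {0..} = at u"
    using assms(2) by (intro at_within_interior) simp
  ultimately show ?thesis
    by (simp add: DERIV_deriv_iff_real_differentiable)
qed

lemma proximate_order_log_slope:
  assumes "proximate_order rp \<rho>"
  obtains L' where "\<And>x. DERIV (\<lambda>x. rp (exp x) * x) x :> L' x" and "(L' \<longlongrightarrow> \<rho>) at_top"
proof
  fix x :: real
  show "DERIV (\<lambda>x. rp (exp x) * x) x :> deriv rp (exp x) * exp x * x + rp (exp x)"
    using DERIV_chain2[OF proximate_order_DERIV[OF assms exp_gt_zero] DERIV_exp]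
    by (auto intro!: derivative_eq_intros)
next
  have "((\<lambda>r. deriv rp r * r * ln r) \<longlongrightarrow> 0) at_top" and "(rp \<longlongrightarrow> \<rho>) at_top"
    using assms by (simp_all add: proximate_order_def)
  from this[THEN filterlim_compose, OF exp_at_top]
  have "((\<lambda>x. deriv rp (exp x) * exp x * x) \<longlongrightarrow> 0) at_top"
    and "((\<lambda>x. rp (exp x)) \<longlongrightarrow> \<rho>) at_top"
    by (simp_all add: o_def)
  from tendsto_add[OF this]
  show "((\<lambda>x. deriv rp (exp x) * exp x * x + rp (exp x)) \<longlongrightarrow> \<rho>) at_top"
    by simp
qed

lemma proximate_order_shift_bound:
  assumes "proximate_order rp \<rho>" and "0 < \<tau>" and "\<rho> * K - 1 - ln \<rho> < ln \<tau>"
  shows "\<exists>S>0. \<forall>s\<ge>S. \<forall>r>0. s powr rp s * (K + ln r - ln s) \<le> \<tau> * r powr rp r"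
proof -
  let ?L = "\<lambda>x. rp (exp x) * x"
  have "0 < \<rho>" using assms(1) by (simp add: proximate_order_def)
  obtain L' where "\<And>x. DERIV ?L x :> L' x" and "(L' \<longlongrightarrow> \<rho>) at_top"
    using proximate_order_log_slope[OF assms(1)] by blast
  then obtain X where X: "\<And>x y. X \<le> x \<Longrightarrow> 0 < K + y \<Longrightarrow>
      ?L x + ln (K + y) < ln \<tau> + ?L (x + y)"
    using slope_tendsto_imp_shift_bound[OF _ _ \<open>0 < \<rho>\<close> assms(3)] by blast
  have powr_L: "t powr rp t = exp (?L (ln t))" if "0 < t" for t
    using that by (simp add: powr_def)
  show ?thesis
  proof (intro exI[of _ "exp X"] conjI allI impI)
    fix s r :: real assume s: "exp X \<le> s" and "0 < r"
    then have "0 < s" and "X \<le> ln s"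
      using exp_gt_zero order.strict_trans2 ln_ge_iff by blast+
    show "s powr rp s * (K + ln r - ln s) \<le> \<tau> * r powr rp r"
    proof (cases "0 < K + (ln r - ln s)")
      case True
      have "s powr rp s * (K + ln r - ln s) = exp (?L (ln s) + ln (K + (ln r - ln s)))"
        using True \<open>0 < s\<close> by (simp add: powr_L exp_add algebra_simps)
      also have "\<dots> \<le> exp (ln \<tau> + ?L (ln s + (ln r - ln s)))"
        using X[OF \<open>X \<le> ln s\<close> True] by simp
      also have "\<dots> = \<tau> * r powr rp r"
        using \<open>0 < r\<close> assms(2) by (simp add: powr_L exp_add)
      finally show ?thesis .
    next
      case False
      then have "s powr rp s * (K + ln r - ln s) \<le> 0"
        by (intro mult_nonneg_nonpos) auto
      moreover have "0 \<le> \<tau> * r powr rp r"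
        using assms(2) by simp
      ultimately show ?thesis by linarith
    qed
  qed simp
qed

lemma proximate_order_powr_surj:
  assumes "proximate_order rp \<rho>" and "1 \<le> y"
  shows "\<exists>s\<ge>1. s powr rp s = y"
proof -
  have "0 < \<rho>" and lim: "(rp \<longlongrightarrow> \<rho>) at_top" and diff: "rp differentiable_on {0..}"
    using assms(1) by (simp_all add: proximate_order_def)
  have "filterlim (\<lambda>r. rp r * ln r) at_top at_top"
    by (rule filterlim_tendsto_pos_mult_at_top[OF lim \<open>0 < \<rho>\<close> ln_at_top])
  then have "filterlim (\<lambda>r. exp (rp r * ln r)) at_top at_top"
    by (rule filterlim_compose[OF exp_at_top])
  then have "\<forall>\<^sub>F r in at_top. y \<le> exp (rp r * ln r) \<and> 1 \<le> r"
    by (intro eventually_conj eventually_ge_at_top) (simp add: filterlim_at_top)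
  then obtain R where "y \<le> exp (rp R * ln R)" and "1 \<le> R"
    by (auto simp: eventually_at_top_linorder)
  then have "y \<le> R powr rp R"
    by (simp add: powr_def)
  moreover have "continuous_on {1..R} rp"
    using differentiable_imp_continuous_on[OF diff] by (rule continuous_on_subset) auto
  then have "continuous_on {1..R} (\<lambda>r. r powr rp r)"
    by (intro continuous_on_powr continuous_on_id) auto
  ultimately show ?thesis
    using IVT'[of "\<lambda>r. r powr rp r" 1 y R] assms(2) \<open>1 \<le> R\<close> by auto
qed

lemma prox_inv_inverse:
  assumes "proximate_order rp \<rho>" and "1 \<le> y"
  shows "0 < prox_inv rp y" and "prox_inv rp y powr rp (prox_inv rp y) = y"
proof -
  have "y \<in> (\<lambda>r. r powr rp r) ` {0<..}"
    using proximate_order_powr_surj[OF assms] by force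
  from inv_into_into[OF this] f_inv_into_f[OF this]
  show "0 < prox_inv rp y" and "prox_inv rp y powr rp (prox_inv rp y) = y"
    unfolding prox_inv_def by simp_all
qed

lemma prox_inv_at_top:
  assumes "normalized_proximate_order rp \<rho>"
  shows "filterlim (prox_inv rp) at_top at_top"
proof (unfold filterlim_at_top, intro allI)
  fix S :: real
  define S' where "S' = max S 1"
  have prox: "proximate_order rp \<rho>"
    and mono: "strict_mono_on {0<..} (\<lambda>r. r powr rp r)"
    using assms by (simp_all add: normalized_proximate_order_def)
  have "S \<le> prox_inv rp y" if y: "S' powr rp S' + 1 \<le> y" for y
  proof (rule ccontr)
    assume "\<not> S \<le> prox_inv rp y"
    moreover have "1 \<le> y" and "S' powr rp S' < y"
      using y powr_ge_zero[of S' "rp S'"] by linarith+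
    ultimately have "prox_inv rp y powr rp (prox_inv rp y) < S' powr rp S'"
      using prox_inv_inverse(1)[OF prox] by (intro strict_mono_onD[OF mono]) (auto simp: S'_def)
    then show False
      using prox_inv_inverse(2)[OF prox \<open>1 \<le> y\<close>] \<open>S' powr rp S' < y\<close> by simp
  qed
  then show "\<forall>\<^sub>F y in at_top. S \<le> prox_inv rp y"
    by (auto simp: eventually_at_top_linorder)
qed

lemma lnE_bound_imp_less:
  fixes \<Lambda> :: ereal and \<rho> \<sigma> \<tau> :: real
  assumes "0 < \<rho>" and "0 \<le> \<sigma>" and "\<sigma> < \<tau>"
    and "\<Lambda> - ereal (1 / \<rho>) - ereal (ln \<rho> / \<rho>) \<le> ereal (1 / \<rho>) * lnE \<sigma>"
  shows "\<Lambda> < ereal ((ln \<tau> + 1 + ln \<rho>) / \<rho>)"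
proof (cases "\<sigma> = 0")
  case True
  then have "\<Lambda> - ereal (1 / \<rho>) - ereal (ln \<rho> / \<rho>) = -\<infinity>"
    using assms(1,4) by (simp add: lnE_def)
  then show ?thesis by (cases \<Lambda>) auto
next
  case False
  then have "ln \<sigma> / \<rho> < ln \<tau> / \<rho>"
    using assms(1-3) by (simp add: divide_strict_right_mono)
  moreover have "\<Lambda> - ereal (1 / \<rho>) - ereal (ln \<rho> / \<rho>) \<le> ereal (ln \<sigma> / \<rho>)"
    using False assms(4) by (simp add: lnE_def)
  ultimately show ?thesis
    by (cases \<Lambda>) (auto simp: add_divide_distrib)
qed

lemma lnE_le_of_root_bound:
  assumes "0 < l" and "0 \<le> m" and "ereal (1 / l) * lnE m + ereal (ln s) < ereal K"
  shows "lnE m + ereal (l * ln r) \<le> ereal (l * (K + ln r - ln s))"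
proof (cases "m = 0")
  case False
  then have "ln m / l < K - ln s"
    using assms(2,3) by (simp add: lnE_def)
  then have "ln m + l * ln r \<le> l * (K + ln r - ln s)"
    using assms(1) by (simp add: field_simps)
  then show ?thesis
    using False by (simp add: lnE_def)
qed (simp add: lnE_def)

lemma coeff_log_bound_of_limsup:
  fixes c :: "nat \<Rightarrow> real"
  assumes rho: "normalized_proximate_order rp \<rho>" and "0 < \<tau>" and "\<And>l. 0 \<le> c l"
    and K: "\<rho> * K - 1 - ln \<rho> < ln \<tau>"
    and limsup: "limsup (\<lambda>l. ereal (1 / real l) * lnE (c l) + ereal (ln (prox_inv rp (real l))))
                   < ereal K"
  shows "\<exists>N>0. \<forall>l\<ge>N. \<forall>r>0. lnE (c l) + ereal (real l * ln r) \<le> ereal (\<tau> * r powr rp r)"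
proof -
  have prox: "proximate_order rp \<rho>"
    using rho by (simp add: normalized_proximate_order_def)
  obtain S where S: "\<And>s r. S \<le> s \<Longrightarrow> 0 < r \<Longrightarrow>
      s powr rp s * (K + ln r - ln s) \<le> \<tau> * r powr rp r"
    using proximate_order_shift_bound[OF prox \<open>0 < \<tau>\<close> K] by blast
  have "\<forall>\<^sub>F l in sequentially. 1 \<le> l \<and> S \<le> prox_inv rp (real l) \<and>
      ereal (1 / real l) * lnE (c l) + ereal (ln (prox_inv rp (real l))) < ereal K"
    using filterlim_compose[OF prox_inv_at_top[OF rho] filterlim_real_sequentially] limsup
    by (intro eventually_conj eventually_ge_at_top Limsup_lessD) (simp_all add: filterlim_at_top)
  then obtain N where N: "\<And>l. N \<le> l \<Longrightarrow> 1 \<le> l \<and> S \<le> prox_inv rp (real l) \<and>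
      ereal (1 / real l) * lnE (c l) + ereal (ln (prox_inv rp (real l))) < ereal K"
    by (auto simp: eventually_sequentially)
  have "lnE (c l) + ereal (real l * ln r) \<le> ereal (\<tau> * r powr rp r)"
    if "N \<le> l" and "0 < r" for l r
  proof -
    define s where "s = prox_inv rp (real l)"
    have "S \<le> s" and "s powr rp s = real l"
      using N[OF \<open>N \<le> l\<close>] prox_inv_inverse(2)[OF prox] by (simp_all add: s_def)
    have "lnE (c l) + ereal (real l * ln r) \<le> ereal (real l * (K + ln r - ln s))"
      using N[OF \<open>N \<le> l\<close>] assms(3) by (intro lnE_le_of_root_bound) (simp_all add: s_def)
    also have "\<dots> \<le> ereal (\<tau> * r powr rp r)"
      using S[OF \<open>S \<le> s\<close> \<open>0 < r\<close>] \<open>s powr rp s = real l\<close> by simp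
    finally show ?thesis .
  qed
  moreover have "0 < N"
    using N[of N] by simp
  ultimately show ?thesis by blast
qed

theorem lemma3p6:
  fixes n :: nat and \<rho>\<^sub>p :: "real \<Rightarrow> real" and \<rho> \<sigma> :: real
    and f :: "clif \<Rightarrow> clif" and a :: "nat \<Rightarrow> clif"
  assumes rho: "normalized_proximate_order \<rho>\<^sub>p \<rho>"
    and fA: "f \<in> A_class n \<rho>\<^sub>p"
    and a_space: "\<forall>l. a l \<in> clif_space n"
    and series: "\<forall>x. paravector n x \<longrightarrow>
                   (\<forall>A. (\<lambda>l. clif_mult n (clif_pow n x l) (a l) A) sums (f x A))"
    and sigma: "\<sigma> \<ge> 0"
    and hyp: "ereal (1 / \<rho>) * lnE \<sigma> \<ge>
       limsup (\<lambda>l. ereal (1 / real l) * lnE (clif_norm n (a l))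
                    + ereal (ln (prox_inv \<rho>\<^sub>p (real l))))
       - ereal (1 / \<rho>) - ereal (ln \<rho> / \<rho>)"
  shows "\<forall>\<tau>'>\<sigma>. \<exists>N::nat. \<exists>C::real. N > 0 \<and> C > 0 \<and>
           (\<forall>r>0. (SUP l\<in>{N..}. lnE (clif_norm n (a l)) + ereal (real l * ln r))
                    \<le> ereal (\<tau>' * r powr \<rho>\<^sub>p r + C))"
proof (intro allI impI)
  \<comment> \<open>Only the coefficient condition \<open>hyp\<close> matters.\<close>
  fix \<tau>' assume "\<sigma> < \<tau>'"
  have "0 < \<rho>"
    using rho by (simp add: normalized_proximate_order_def proximate_order_def)
  define \<tau> where "\<tau> = (\<sigma> + \<tau>') / 2"
  define K where "K = (ln \<tau> + 1 + ln \<rho>) / \<rho>"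
  have "0 < \<tau>" "\<sigma> < \<tau>" "\<tau> < \<tau>'" "0 < \<tau>'"
    using sigma \<open>\<sigma> < \<tau>'\<close> by (simp_all add: \<tau>_def)
  then have K: "\<rho> * K - 1 - ln \<rho> < ln \<tau>'"
    using \<open>0 < \<rho>\<close> by (simp add: K_def)
  have limsup: "limsup (\<lambda>l. ereal (1 / real l) * lnE (clif_norm n (a l))
                    + ereal (ln (prox_inv \<rho>\<^sub>p (real l)))) < ereal K"
    unfolding K_def using lnE_bound_imp_less[OF \<open>0 < \<rho>\<close> sigma \<open>\<sigma> < \<tau>\<close> hyp] .
  have "\<And>l. 0 \<le> clif_norm n (a l)"
    by (simp add: clif_norm_def sum_nonneg)
  from coeff_log_bound_of_limsup[OF rho \<open>0 < \<tau>'\<close> this K limsup]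
  obtain N where "0 < N" and N: "\<And>l r. N \<le> l \<Longrightarrow> 0 < r \<Longrightarrow>
      lnE (clif_norm n (a l)) + ereal (real l * ln r) \<le> ereal (\<tau>' * r powr \<rho>\<^sub>p r)"
    by blast
  have "(SUP l\<in>{N..}. lnE (clif_norm n (a l)) + ereal (real l * ln r))
      \<le> ereal (\<tau>' * r powr \<rho>\<^sub>p r + 1)" if "0 < r" for r
    using that by (intro SUP_least order.trans[OF N]) auto
  with \<open>0 < N\<close> show "\<exists>N::nat. \<exists>C::real. N > 0 \<and> C > 0 \<and>
           (\<forall>r>0. (SUP l\<in>{N..}. lnE (clif_norm n (a l)) + ereal (real l * ln r))
                    \<le> ereal (\<tau>' * r powr \<rho>\<^sub>p r + C))"
    by (intro exI[of _ N] exI[of _ 1]) simp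
qed

end
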